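(* Consider the discrete-time $Geo^X/G_r^{(a,b)}/1$ queue with single ($\delta=0$) or multiple ($\delta=1$) vacations described in the context, with $\rho<1$. Let $P^+(x)=\sum_{n\ge0}p^+_nx^n$ be the pgf of the queue length at service completion epochs. Then for all complex $x$ with $|x|\le1$ and $x^b\ne K^{(b)}(x)$, $$P^+(x)=\frac{\begin{aligned}&\sum_{n=0}^{a-1}p^+_nx^n\{H(x)-1\}K^{(b)}(x)+\sum_{n=0}^{a-1}Q^+_n\Big[x^n\{\delta H(x)-1\}K^{(b)}(x)\\&\quad+x^b(1-\delta)\sum_{j=n}^{a-1}e_{j,n}\Big(\sum_{i=a}^bg_{i-j}K^{(i)}(x)+\sum_{i=b+1-j}^\infty g_ix^{i+j-b}K^{(b)}(x)\Big)\Big]\\&\quad+\sum_{n=a}^{b-1}(p^+_n+Q^+_n)\{x^bK^{(n)}(x)-x^nK^{(b)}(x)\}\end{aligned}}{x^b-K^{(b)}(x)}.$$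
   Context: Time is slotted. Fix integers $1\le a\le b$, $\lambda\in(0,1)$, $\bar\lambda=1-\lambda$, and a group-size distribution $(g_m)_{m\ge1}$ with finite mean $\bar g$ and pgf $G(z)=\sum_{m\ge1}g_mz^m$; $g_m=0$ for $m\le0$. In each slot a group arrives with probability $\lambda$, with size distribution $(g_m)$. Service follows the $(a,b)$ bulk rule (start only if at least $a$ wait; take all if $a\le r\le b$ wait, exactly $b$ if more than $b$ wait). A batch of size $r$ ($a\le r\le b$) has service-time pmf $s_r(n)$, $n\ge1$, pgf $S_r^*(z)$, mean $s_r$, $\mu_b=1/s_b$. Vacation times have pmf $v_n$, $n\ge1$, pgf $V^*(z)$, finite mean. $\delta=0$: single vacation (server stays dormant after a vacation until $a$ wait); $\delta=1$: multiple vacations. $\rho=\lambda\bar g/(b\mu_b)<1$. Stationary probabilities $p_{n,0}$ ($0\le n\le a-1$, dormant), $p_{n,r}(u)$ ($n\ge0$ waiting, batch size $a\le r\le b$ in service, remaining service $u\ge1$), $Q_n(u)$ ($n\ge0$ waiting, on vacation, remaining vacation $u\ge1$) satisfy: (E1) $p_{0,0}=(1-\delta)[\bar\lambda p_{0,0}+\bar\lambda Q_0(1)]$; (E2) $p_{n,0}=(1-\delta)[\bar\lambda p_{n,0}+\lambda\sum_{i=1}^ng_ip_{n-i,0}+\bar\lambda Q_n(1)+\lambda\sum_{i=1}^ng_iQ_{n-i}(1)]$, $1\le n\le a-1$; (E3) $p_{0,r}(u)=\bar\lambda p_{0,r}(u+1)+s_r(u)\big[\sum_{m=a}^b(\bar\lambda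 p_{r,m}(1)+\lambda\sum_{i=1}^rg_ip_{r-i,m}(1))+\bar\lambda Q_r(1)+\lambda\sum_{i=1}^rg_iQ_{r-i}(1)+(1-\delta)\lambda\sum_{i=0}^{a-1}g_{r-i}p_{i,0}\big]$, $a\le r\le b$; (E4) $p_{n,r}(u)=\bar\lambda p_{n,r}(u+1)+\lambda\sum_{i=1}^ng_ip_{n-i,r}(u+1)$, $n\ge1$, $a\le r\le b-1$; (E5) $p_{n,b}(u)=\bar\lambda p_{n,b}(u+1)+\lambda\sum_{i=1}^ng_ip_{n-i,b}(u+1)+s_b(u)\big[\sum_{m=a}^b(\bar\lambda p_{n+b,m}(1)+\lambda\sum_{i=1}^{n+b}g_ip_{n+b-i,m}(1))+\bar\lambda Q_{n+b}(1)+\lambda\sum_{i=1}^{n+b}g_iQ_{n+b-i}(1)+(1-\delta)\lambda\sum_{i=0}^{a-1}g_{n+b-i}p_{i,0}\big]$, $n\ge1$; (E6) $Q_0(u)=\bar\lambda Q_0(u+1)+\bar\lambda(\sum_{m=a}^bp_{0,m}(1)+\delta Q_0(1))v_u$; (E7) $Q_n(u)=\bar\lambda Q_n(u+1)+\lambda\sum_{i=1}^ng_iQ_{n-i}(u+1)+v_u\big[\bar\lambda(\sum_{m=a}^bp_{n,m}(1)+\delta Q_n(1))+\lambda\sum_{i=1}^ng_i(\sum_{m=a}^bp_{n-i,m}(1)+\delta Q_{n-i}(1))\big]$, $1\le n\le a-1$; (E8) $Q_n(u)=\bar\lambda Q_n(u+1)+\lambda\sum_{i=1}^ng_iQ_{n-i}(u+1)$,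 $n\ge a$; (N) $(1-\delta)\sum_{n=0}^{a-1}p_{n,0}+\sum_{n,r,u}p_{n,r}(u)+\sum_{n,u}Q_n(u)=1$. With $\tau=\sum_{m\ge0}\sum_{r=a}^bp_{m,r}(1)+\sum_{m\ge0}Q_m(1)$: $p^+_{0,r}=\tau^{-1}\bar\lambda p_{0,r}(1)$, $p^+_{n,r}=\tau^{-1}(\bar\lambda p_{n,r}(1)+\lambda\sum_{i=1}^ng_ip_{n-i,r}(1))$ ($n\ge1$); $p^+_n=\sum_{r=a}^bp^+_{n,r}$; $Q^+_0=\tau^{-1}\bar\lambda Q_0(1)$, $Q^+_n=\tau^{-1}(\bar\lambda Q_n(1)+\lambda\sum_{i=1}^ng_iQ_{n-i}(1))$ ($n\ge1$). $K^{(r)}(x)=S_r^*(\bar\lambda+\lambda G(x))$, $H(x)=V^*(\bar\lambda+\lambda G(x))$. $e_{n,i}$ ($0\le i\le n$): $e_{n,n}=1$, $e_{n,n-1}=g_1$, $e_{n,i}=\sum_{j=i+1}^{n-1}e_{n,j}g_{j-i}+g_{n-i}$ for $0\le i\le n-2$. *)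

theory Defs
  imports "HOL-Analysis.Analysis"
begin

definition pgf :: "(nat \<Rightarrow> real) \<Rightarrow> complex \<Rightarrow> complex" where
  "pgf f z = (\<Sum>n. complex_of_real (f n) * z ^ n)"

text \<open>K^(r)(x) = S_r^*(lambdabar + lambda G(x)); s r is the service-time pmf of a batch of size r.\<close>
definition Kfun :: "real \<Rightarrow> (nat \<Rightarrow> real) \<Rightarrow> (nat \<Rightarrow> nat \<Rightarrow> real) \<Rightarrow> nat \<Rightarrow> complex \<Rightarrow> complex" where
  "Kfun lam g s r x = pgf (s r) (complex_of_real (1 - lam) + complex_of_real lam * pgf g x)"

definition Hfun :: "real \<Rightarrow> (nat \<Rightarrow> real) \<Rightarrow> (nat \<Rightarrow> real) \<Rightarrow> complex \<Rightarrow> complex" where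
  "Hfun lam g v x = pgf v (complex_of_real (1 - lam) + complex_of_real lam * pgf g x)"

function ecoef :: "(nat \<Rightarrow> real) \<Rightarrow> nat \<Rightarrow> nat \<Rightarrow> real" where
  "ecoef g n i =
     (if i = n then 1
      else if i + 1 = n then g 1
      else if i < n then (\<Sum>j\<in>{i+1..n-1}. ecoef g n j * g (j - i)) + g (n - i)
      else 0)"
  by auto
termination
  by (relation "Wellfounded.measure (\<lambda>(g, n, i). n - i)") auto

definition tauc :: "nat \<Rightarrow> nat \<Rightarrow> (nat \<Rightarrow> nat \<Rightarrow> nat \<Rightarrow> real) \<Rightarrow> (nat \<Rightarrow> nat \<Rightarrow> real) \<Rightarrow> real" where
  "tauc a b p Q = (\<Sum>m. \<Sum>r=a..b. p m r 1) + (\<Sum>m. Q m 1)"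

definition pplus_r :: "real \<Rightarrow> (nat \<Rightarrow> real) \<Rightarrow> nat \<Rightarrow> nat \<Rightarrow> (nat \<Rightarrow> nat \<Rightarrow> nat \<Rightarrow> real) \<Rightarrow> (nat \<Rightarrow> nat \<Rightarrow> real) \<Rightarrow> nat \<Rightarrow> nat \<Rightarrow> real" where
  "pplus_r lam g a b p Q n r =
     (if n = 0 then (1 - lam) * p 0 r 1
      else (1 - lam) * p n r 1 + lam * (\<Sum>i=1..n. g i * p (n - i) r 1)) / tauc a b p Q"

definition pplus :: "real \<Rightarrow> (nat \<Rightarrow> real) \<Rightarrow> nat \<Rightarrow> nat \<Rightarrow> (nat \<Rightarrow> nat \<Rightarrow> nat \<Rightarrow> real) \<Rightarrow> (nat \<Rightarrow> nat \<Rightarrow> real) \<Rightarrow> nat \<Rightarrow> real" where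
  "pplus lam g a b p Q n = (\<Sum>r=a..b. pplus_r lam g a b p Q n r)"

definition Qplus :: "real \<Rightarrow> (nat \<Rightarrow> real) \<Rightarrow> nat \<Rightarrow> nat \<Rightarrow> (nat \<Rightarrow> nat \<Rightarrow> nat \<Rightarrow> real) \<Rightarrow> (nat \<Rightarrow> nat \<Rightarrow> real) \<Rightarrow> nat \<Rightarrow> real" where
  "Qplus lam g a b p Q n =
     (if n = 0 then (1 - lam) * Q 0 1
      else (1 - lam) * Q n 1 + lam * (\<Sum>i=1..n. g i * Q (n - i) 1)) / tauc a b p Q"

end

theory Submission
  imports Defs
begin

text \<open>
  Condition every state on the remaining time u of the current service or vacation. In
  generating-function form one elapsed slot multiplies by A(x) = 1 - lambda + lambda G(x), so
  summing the recursions (E3)-(E8) over u turns them into K^(r)(x), resp. H(x), times the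
  generating function of the epochs at which a service, resp. a vacation, begins. Those epochs are
  departure or vacation-end epochs, counted by p^+ and Q^+, or arrivals to the dormant server; by
  (E1)-(E2) the dormant probabilities solve a renewal equation in the group sizes driven by Q^+,
  whose solution has the coefficients e_{j,n}. Only a batch of the maximal size b can leave
  customers behind, which is where x^b - K^(b)(x) comes from when the resulting linear relation
  is solved for P^+(x).
\<close>

section \<open>Generating functions on the closed unit disc\<close>

lemma summable_abs_add:
  fixes f h :: "nat \<Rightarrow> real"
  assumes "summable (\<lambda>n. \<bar>f n\<bar>)" "summable (\<lambda>n. \<bar>h n\<bar>)"
  shows "summable (\<lambda>n. \<bar>f n + h n\<bar>)"
  by (rule summable_comparison_test'[OF summable_add[OF assms]]) (simp add: abs_triangle_ineq)

lemma summable_abs_cmult: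
  fixes f :: "nat \<Rightarrow> real"
  shows "summable (\<lambda>n. \<bar>f n\<bar>) \<Longrightarrow> summable (\<lambda>n. \<bar>t * f n\<bar>)"
  by (simp add: abs_mult summable_mult)

lemma summable_abs_sum:
  fixes f :: "'a \<Rightarrow> nat \<Rightarrow> real"
  assumes "\<And>r. r \<in> R \<Longrightarrow> summable (\<lambda>n. \<bar>f r n\<bar>)"
  shows "summable (\<lambda>n. \<bar>\<Sum>r\<in>R. f r n\<bar>)"
proof (rule summable_comparison_test'[OF summable_sum[OF assms]])
  show "norm \<bar>\<Sum>r\<in>R. f r n\<bar> \<le> (\<Sum>r\<in>R. \<bar>f r n\<bar>)" for n
    unfolding real_norm_def abs_abs by (rule sum_abs)
qed

lemma summable_abs_finite_support:
  fixes f :: "nat \<Rightarrow> real"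
  assumes "finite {n. P n}"
  shows "summable (\<lambda>n. \<bar>if P n then f n else 0\<bar>)"
proof -
  have "(\<lambda>n. \<bar>if P n then f n else 0\<bar>) = (\<lambda>n. if n \<in> {n. P n} then \<bar>f n\<bar> else 0)"
    by auto
  then show ?thesis
    using sums_summable[OF sums_If_finite_set[OF assms]] by metis
qed

lemma norm_pgf_term_le:
  fixes x :: complex
  assumes "norm x \<le> 1"
  shows "norm (complex_of_real (c n) * x ^ n) \<le> \<bar>c n\<bar>"
proof -
  have "norm (x ^ n) \<le> 1"
    using assms by (simp add: norm_power power_le_one)
  then show ?thesis
    by (simp add: norm_mult mult_left_le)
qed

lemma summable_norm_pgf:
  assumes "summable (\<lambda>n. \<bar>c n\<bar>)" "norm x \<le> 1"
  shows "summable (\<lambda>n. norm (complex_of_real (c n) * x ^ n))"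
  by (rule summable_comparison_test'[OF assms(1)]) (simp add: norm_pgf_term_le[OF assms(2)])

lemma pgf_sums:
  assumes "summable (\<lambda>n. \<bar>c n\<bar>)" "norm x \<le> 1"
  shows "(\<lambda>n. complex_of_real (c n) * x ^ n) sums pgf c x"
  unfolding pgf_def by (rule summable_sums, rule summable_norm_cancel, rule summable_norm_pgf[OF assms])

lemma pgf_eqI: "(\<lambda>n. complex_of_real (c n) * x ^ n) sums S \<Longrightarrow> pgf c x = S"
  by (simp add: pgf_def sums_iff)

lemma norm_pgf_le:
  assumes "summable (\<lambda>n. \<bar>c n\<bar>)" "norm x \<le> 1"
  shows "norm (pgf c x) \<le> (\<Sum>n. \<bar>c n\<bar>)"
  unfolding pgf_def by (rule norm_suminf_le[OF norm_pgf_term_le[OF assms(2), of c] assms(1)])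

lemma pgf_add:
  assumes "summable (\<lambda>n. \<bar>c n\<bar>)" "summable (\<lambda>n. \<bar>e n\<bar>)" "norm x \<le> 1"
  shows "pgf (\<lambda>n. c n + e n) x = pgf c x + pgf e x"
  by (rule pgf_eqI) (use sums_add[OF pgf_sums[OF assms(1,3)] pgf_sums[OF assms(2,3)]] in \<open>simp add: distrib_right\<close>)

lemma pgf_cmult:
  assumes "summable (\<lambda>n. \<bar>c n\<bar>)" "norm x \<le> 1"
  shows "pgf (\<lambda>n. t * c n) x = complex_of_real t * pgf c x"
  by (rule pgf_eqI) (use sums_mult[OF pgf_sums[OF assms], of "complex_of_real t"] in \<open>simp add: mult.assoc\<close>)

lemma pgf_sum:
  assumes "finite R" "\<And>r. r \<in> R \<Longrightarrow> summable (\<lambda>n. \<bar>c r n\<bar>)" "norm x \<le> 1"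
  shows "pgf (\<lambda>n. \<Sum>r\<in>R. c r n) x = (\<Sum>r\<in>R. pgf (c r) x)"
  by (rule pgf_eqI) (use sums_sum[OF pgf_sums[OF assms(2,3)]] in \<open>simp add: sum_distrib_right\<close>)

lemma pgf_finite_support: "pgf (\<lambda>n. if n < k then c n else 0) x = (\<Sum>n<k. complex_of_real (c n) * x ^ n)"
  by (rule pgf_eqI)
    (use sums_If_finite_set[of "{..<k}" "\<lambda>n. complex_of_real (c n) * x ^ n"] in
      \<open>simp add: if_distrib[of complex_of_real] if_distrib[of "\<lambda>z. z * _"] cong: if_cong\<close>)

lemma pgf_single: "pgf (\<lambda>n. if n = 0 then t else 0) x = complex_of_real t"
  using pgf_finite_support[of 1 "\<lambda>_. t" x] by (simp add: less_Suc_eq_0_disj)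

lemma pgf_shift:
  assumes "summable (\<lambda>n. \<bar>c n\<bar>)" "norm x \<le> 1"
  shows "x ^ k * pgf (\<lambda>n. c (n + k)) x = pgf c x - (\<Sum>m<k. complex_of_real (c m) * x ^ m)"
proof -
  have "summable (\<lambda>n. \<bar>c (n + k)\<bar>)"
    using assms(1) by (rule summable_ignore_initial_segment)
  from sums_mult[OF pgf_sums[OF this assms(2)], of "x ^ k"]
  have "(\<lambda>n. complex_of_real (c (n + k)) * x ^ (n + k)) sums (x ^ k * pgf (\<lambda>n. c (n + k)) x)"
    by (simp add: power_add mult_ac)
  moreover have "(\<lambda>n. complex_of_real (c (n + k)) * x ^ (n + k)) sums
      (pgf c x - (\<Sum>m<k. complex_of_real (c m) * x ^ m))"
    using sums_split_initial_segment[OF pgf_sums[OF assms]] .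
  ultimately show ?thesis
    using sums_unique2 by blast
qed

lemma pgf_shifted_tail:
  fixes g :: "nat \<Rightarrow> real"
  assumes g: "summable (\<lambda>n. \<bar>g n\<bar>)" and x: "norm x \<le> 1" and j: "j \<le> b"
  shows "pgf (\<lambda>n. g (n + b - j)) x =
    complex_of_real (g (b - j)) + (\<Sum>i. if b + 1 - j \<le> i then complex_of_real (g i) * x ^ (i + j - b) else 0)"
proof -
  define k where "k = b - j"
  define F where "F i = (if Suc k \<le> i then complex_of_real (g i) * x ^ (i - k) else 0)" for i
  have "summable (\<lambda>n. \<bar>g (n + k)\<bar>)"
    using g by (rule summable_ignore_initial_segment)
  from pgf_sums[OF this x]
  have "(\<lambda>i. complex_of_real (g (Suc i + k)) * x ^ Suc i) sums (pgf (\<lambda>n. g (n + k)) x - complex_of_real (g k))"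
    by (subst sums_Suc_iff) simp
  moreover have "F (i + Suc k) = complex_of_real (g (Suc i + k)) * x ^ Suc i" for i
    by (simp add: F_def)
  ultimately have "(\<lambda>i. F (i + Suc k)) sums (pgf (\<lambda>n. g (n + k)) x - complex_of_real (g k))"
    by simp
  moreover have "\<And>i. i < Suc k \<Longrightarrow> F i = 0"
    by (simp add: F_def)
  ultimately have "F sums (pgf (\<lambda>n. g (n + k)) x - complex_of_real (g k))"
    using sums_zero_iff_shift[of "Suc k" F] by simp
  moreover have "(\<lambda>i. if b + 1 - j \<le> i then complex_of_real (g i) * x ^ (i + j - b) else 0) = F"
    using j by (intro ext) (auto simp: F_def k_def)
  moreover have "(\<lambda>n. g (n + b - j)) = (\<lambda>n. g (n + k))"
    using j by (simp add: k_def)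
  ultimately show ?thesis
    by (simp add: sums_iff k_def)
qed

lemma nonneg_summable_on_rows:
  fixes F :: "nat \<Rightarrow> nat \<Rightarrow> real"
  assumes F: "(\<lambda>(n, u). F u n) summable_on (UNIV \<times> {1..})"
    and F_nonneg: "\<And>u n. 1 \<le> u \<Longrightarrow> 0 \<le> F u n"
  shows "\<And>u. 1 \<le> u \<Longrightarrow> summable (F u)" and "(\<lambda>u. suminf (F u)) \<longlonglongrightarrow> 0"
proof -
  have S: "(\<lambda>(u, n). F u n) summable_on ({1..} \<times> UNIV)"
    using F summable_on_swap[of "\<lambda>(n, u). F u n" UNIV "{1..}"] by (simp add: case_prod_unfold)
  have row: "F u summable_on UNIV" if "1 \<le> u" for u
    using summable_on_SigmaD1[OF S, of u] that by simp
  show row_summable: "summable (F u)" if "1 \<le> u" for u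
    using row[OF that] F_nonneg[OF that] by (simp add: summable_on_UNIV_nonneg_real_iff)
  have row_sum: "infsum (F u) UNIV = suminf (F u)" if "1 \<le> u" for u
    using has_sum_imp_sums[OF has_sum_infsum[OF row[OF that]]] by (simp add: sums_iff)
  have "(\<lambda>u. infsum (F u) UNIV) summable_on Suc ` UNIV"
  proof -
    have "{1..} = range Suc"
      by (auto simp: image_iff Suc_le_eq gr0_conv_Suc)
    then show ?thesis
      using summable_on_SigmaD[OF S] row by auto
  qed
  then have "(\<lambda>u. suminf (F (Suc u))) summable_on UNIV"
    by (simp add: summable_on_reindex o_def row_sum)
  then have "summable (\<lambda>u. suminf (F (Suc u)))"
    by (simp add: summable_on_UNIV_nonneg_real_iff row_summable F_nonneg suminf_nonneg)
  then show "(\<lambda>u. suminf (F u)) \<longlonglongrightarrow> 0"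
    by (rule LIMSEQ_imp_Suc[OF summable_LIMSEQ_zero])
qed

lemma power_mult_pgf_rows_tendsto_zero:
  fixes F :: "nat \<Rightarrow> nat \<Rightarrow> real" and A :: complex
  assumes A_le_1: "norm A \<le> 1" and x: "norm x \<le> 1"
    and F_nonneg: "\<And>u n. 1 \<le> u \<Longrightarrow> 0 \<le> F u n"
    and F_summable: "(\<lambda>(n, u). F u n) summable_on (UNIV \<times> {1..})"
  shows "(\<lambda>U. A ^ (U + 1) * pgf (F (U + 1)) x) \<longlonglongrightarrow> 0"
proof -
  have F_abs: "summable (\<lambda>n. \<bar>F u n\<bar>)" if "1 \<le> u" for u
    using nonneg_summable_on_rows(1)[OF F_summable F_nonneg that] F_nonneg[OF that] by simp
  have "norm (A ^ (U + 1) * pgf (F (U + 1)) x) \<le> suminf (F (Suc U))" for U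
  proof -
    have "norm (A ^ (U + 1)) \<le> 1"
      unfolding norm_power using A_le_1 by (rule power_le_one[OF norm_ge_zero])
    moreover have "norm (pgf (F (U + 1)) x) \<le> suminf (F (Suc U))"
      using norm_pgf_le[OF F_abs x, of "U + 1"] F_nonneg[of "U + 1"] by simp
    ultimately show ?thesis
      using mult_mono[OF _ _ zero_le_one norm_ge_zero] by (fastforce simp: norm_mult)
  qed
  moreover have "(\<lambda>U. suminf (F (Suc U))) \<longlonglongrightarrow> 0"
    using nonneg_summable_on_rows(2)[OF F_summable F_nonneg] by (rule LIMSEQ_Suc)
  ultimately show ?thesis
    by (rule Lim_null_comparison[OF always_eventually[OF allI]])
qed

section \<open>Geometric batch arrivals\<close>

definition arrival_conv :: "real \<Rightarrow> (nat \<Rightarrow> real) \<Rightarrow> (nat \<Rightarrow> real) \<Rightarrow> nat \<Rightarrow> real" where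
  "arrival_conv lam g c n = (1 - lam) * c n + lam * (\<Sum>i=1..n. g i * c (n - i))"

definition arrival_pmf :: "real \<Rightarrow> (nat \<Rightarrow> real) \<Rightarrow> nat \<Rightarrow> real" where
  "arrival_pmf lam g n = (if n = 0 then 1 - lam else lam * g n)"

definition arrival_pgf :: "real \<Rightarrow> (nat \<Rightarrow> real) \<Rightarrow> complex \<Rightarrow> complex" where
  "arrival_pgf lam g x = complex_of_real (1 - lam) + complex_of_real lam * pgf g x"

lemma Kfun_eq_pgf_arrival_pgf: "Kfun lam g s r x = pgf (s r) (arrival_pgf lam g x)"
  unfolding Kfun_def arrival_pgf_def ..

lemma Hfun_eq_pgf_arrival_pgf: "Hfun lam g v x = pgf v (arrival_pgf lam g x)"
  unfolding Hfun_def arrival_pgf_def ..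

locale batch_arrivals =
  fixes lam :: real and g :: "nat \<Rightarrow> real"
  assumes lam_pos: "0 < lam" and lam_less_1: "lam < 1"
    and g_nonneg: "\<And>m. 0 \<le> g m" and g_0: "g 0 = 0" and g_sums: "g sums 1"
begin

lemma summable_abs_g: "summable (\<lambda>n. \<bar>g n\<bar>)"
  using g_sums g_nonneg by (simp add: sums_iff)

lemma summable_abs_g_diff: "summable (\<lambda>m. \<bar>g (m - j)\<bar>)"
  using summable_iff_shift[of "\<lambda>m. \<bar>g (m - j)\<bar>" j] summable_abs_g by simp

lemma arrival_pmf_eq: "arrival_pmf lam g n = (if n = 0 then 1 - lam else 0) + lam * g n"
  by (simp add: arrival_pmf_def g_0)

lemma arrival_pmf_nonneg: "0 \<le> arrival_pmf lam g n"
  using lam_pos lam_less_1 g_nonneg by (simp add: arrival_pmf_def)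

lemma arrival_pmf_sums: "arrival_pmf lam g sums 1"
  using sums_add[OF sums_single[of 0 "\<lambda>_. 1 - lam"] sums_mult[OF g_sums, of lam]]
  by (simp add: arrival_pmf_eq[abs_def])

lemma summable_abs_arrival_pmf: "summable (\<lambda>n. \<bar>arrival_pmf lam g n\<bar>)"
  using arrival_pmf_sums by (simp add: arrival_pmf_nonneg sums_iff)

lemma pgf_arrival_pmf:
  assumes "norm x \<le> 1"
  shows "pgf (arrival_pmf lam g) x = arrival_pgf lam g x"
proof (rule pgf_eqI)
  have "(\<lambda>n. complex_of_real (arrival_pmf lam g n) * x ^ n) =
      (\<lambda>n. (if n = 0 then complex_of_real (1 - lam) else 0) + complex_of_real lam * (complex_of_real (g n) * x ^ n))"
    by (auto simp: arrival_pmf_def g_0)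
  then show "(\<lambda>n. complex_of_real (arrival_pmf lam g n) * x ^ n) sums arrival_pgf lam g x"
    unfolding arrival_pgf_def
    using sums_add[OF sums_single[of 0 "\<lambda>_. complex_of_real (1 - lam)"]
        sums_mult[OF pgf_sums[OF summable_abs_g assms], of "complex_of_real lam"]] by simp
qed

lemma norm_arrival_pgf_le_1:
  assumes "norm x \<le> 1"
  shows "norm (arrival_pgf lam g x) \<le> 1"
  using norm_pgf_le[OF summable_abs_arrival_pmf assms] arrival_pmf_sums
  by (simp add: pgf_arrival_pmf[OF assms] arrival_pmf_nonneg sums_iff)

lemma arrival_conv_linear:
  "arrival_conv lam g (\<lambda>k. (\<Sum>m\<in>M. c m k) + t * e k) n =
    (\<Sum>m\<in>M. arrival_conv lam g (c m) n) + t * arrival_conv lam g e n"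
proof -
  have "(\<Sum>i=1..n. g i * (\<Sum>m\<in>M. c m (n - i))) = (\<Sum>m\<in>M. \<Sum>i=1..n. g i * c m (n - i))"
    by (simp add: sum_distrib_left sum.swap[of _ M])
  then show ?thesis
    unfolding arrival_conv_def
    by (simp add: sum.distrib sum_subtractf sum_distrib_left distrib_left left_diff_distrib mult_ac)
qed

lemma arrival_conv_eq_Cauchy: "arrival_conv lam g c n = (\<Sum>i\<le>n. arrival_pmf lam g i * c (n - i))"
proof -
  have "{..n} = insert 0 {1..n}"
    by auto
  then show ?thesis
    by (simp add: arrival_conv_def arrival_pmf_def sum_distrib_left mult.assoc)
qed

lemma summable_abs_arrival_conv:
  assumes "summable (\<lambda>n. \<bar>c n\<bar>)"
  shows "summable (\<lambda>n. \<bar>arrival_conv lam g c n\<bar>)"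
proof (rule summable_comparison_test')
  show "summable (\<lambda>n. \<Sum>i\<le>n. \<bar>arrival_pmf lam g i\<bar> * \<bar>c (n - i)\<bar>)"
    using summable_Cauchy_product[of "\<lambda>i. \<bar>arrival_pmf lam g i\<bar>" "\<lambda>i. \<bar>c i\<bar>"]
      summable_abs_arrival_pmf assms by simp
  show "norm \<bar>arrival_conv lam g c n\<bar> \<le> (\<Sum>i\<le>n. \<bar>arrival_pmf lam g i\<bar> * \<bar>c (n - i)\<bar>)" for n
    unfolding arrival_conv_eq_Cauchy real_norm_def abs_abs abs_mult[symmetric] by (rule sum_abs)
qed

lemma pgf_arrival_conv:
  assumes x: "norm x \<le> 1" and c: "summable (\<lambda>n. \<bar>c n\<bar>)"
  shows "pgf (arrival_conv lam g c) x = arrival_pgf lam g x * pgf c x"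
proof -
  have coeff: "(\<Sum>i\<le>k. (complex_of_real (arrival_pmf lam g i) * x ^ i) * (complex_of_real (c (k - i)) * x ^ (k - i)))
      = complex_of_real (arrival_conv lam g c k) * x ^ k" for k
    unfolding arrival_conv_eq_Cauchy of_real_sum sum_distrib_right
    by (rule sum.cong) (auto simp: mult_ac power_add[symmetric])
  have "arrival_pgf lam g x * pgf c x =
      (\<Sum>k. \<Sum>i\<le>k. (complex_of_real (arrival_pmf lam g i) * x ^ i) * (complex_of_real (c (k - i)) * x ^ (k - i)))"
    unfolding pgf_arrival_pmf[OF x, symmetric] pgf_def
    by (rule Cauchy_product[OF summable_norm_pgf[OF summable_abs_arrival_pmf x] summable_norm_pgf[OF c x]])
  then show ?thesis
    by (simp add: coeff pgf_def)
qed

lemma pgf_residual_unfold: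
  assumes x: "norm x \<le> 1"
    and F_abs: "\<And>u. 1 \<le> u \<Longrightarrow> summable (\<lambda>n. \<bar>F u n\<bar>)"
    and c_abs: "summable (\<lambda>n. \<bar>c n\<bar>)"
    and F_rec: "\<And>u n. 1 \<le> u \<Longrightarrow> F u n = arrival_conv lam g (F (u + 1)) n + s u * c n"
  shows "arrival_pgf lam g x * pgf (F 1) x =
    (\<Sum>u=1..U. complex_of_real (s u) * arrival_pgf lam g x ^ u) * pgf c x
    + arrival_pgf lam g x ^ (U + 1) * pgf (F (U + 1)) x"
proof (induction U)
  case (Suc U)
  have "F (U + 1) = (\<lambda>n. arrival_conv lam g (F (U + 2)) n + s (U + 1) * c n)"
    using F_rec by fastforce
  moreover have F_abs': "summable (\<lambda>n. \<bar>F (U + 2) n\<bar>)"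
    using F_abs by simp
  moreover have "summable (\<lambda>n. \<bar>s (U + 1) * c n\<bar>)"
    using c_abs by (simp add: abs_mult summable_mult)
  ultimately have "pgf (F (U + 1)) x =
      arrival_pgf lam g x * pgf (F (U + 2)) x + complex_of_real (s (U + 1)) * pgf c x"
    using pgf_add[OF summable_abs_arrival_conv[OF F_abs'] _ x] pgf_arrival_conv[OF x F_abs']
      pgf_cmult[OF c_abs x] by simp
  then show ?case
    using Suc.IH by (simp add: algebra_simps)
qed simp

text \<open>
  Here \<open>F u n\<close> is the mass of the states with \<open>n\<close> customers waiting and \<open>u\<close> slots of the current
  period left, and \<open>c n\<close> the mass of the epochs at which a period with length distribution \<open>s\<close>
  starts with \<open>n\<close> waiting.
\<close>

lemma pgf_residual_recursion:
  assumes x: "norm x \<le> 1"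
    and F_nonneg: "\<And>u n. 1 \<le> u \<Longrightarrow> 0 \<le> F u n"
    and F_summable: "(\<lambda>(n, u). F u n) summable_on (UNIV \<times> {1..})"
    and c_abs: "summable (\<lambda>n. \<bar>c n\<bar>)"
    and s_nonneg: "\<And>n. 0 \<le> s n" and s_0: "s 0 = 0" and s_summable: "summable s"
    and F_rec: "\<And>u n. 1 \<le> u \<Longrightarrow> F u n = arrival_conv lam g (F (u + 1)) n + s u * c n"
  shows "arrival_pgf lam g x * pgf (F 1) x = pgf s (arrival_pgf lam g x) * pgf c x"
proof -
  define A where "A = arrival_pgf lam g x"
  have A_le_1: "norm A \<le> 1"
    unfolding A_def using x by (rule norm_arrival_pgf_le_1)
  have F_abs: "summable (\<lambda>n. \<bar>F u n\<bar>)" if "1 \<le> u" for u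
    using nonneg_summable_on_rows(1)[OF F_summable F_nonneg that] F_nonneg[OF that] by simp
  have "(\<lambda>u. complex_of_real (s u) * A ^ u) sums pgf s A"
    using pgf_sums[OF _ A_le_1] s_summable s_nonneg by simp
  then have "(\<lambda>U. \<Sum>u<Suc U. complex_of_real (s u) * A ^ u) \<longlonglongrightarrow> pgf s A"
    unfolding sums_def by (rule LIMSEQ_Suc)
  then have partial: "(\<lambda>U. \<Sum>u=1..U. complex_of_real (s u) * A ^ u) \<longlonglongrightarrow> pgf s A"
    by (simp add: lessThan_Suc_atMost atLeast0AtMost[symmetric] sum.atLeast_Suc_atMost s_0)
  have remainder: "(\<lambda>U. A ^ (U + 1) * pgf (F (U + 1)) x) \<longlonglongrightarrow> 0"
    using A_le_1 x F_nonneg F_summable by (rule power_mult_pgf_rows_tendsto_zero)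
  have unfold: "A * pgf (F 1) x =
      (\<Sum>u=1..U. complex_of_real (s u) * A ^ u) * pgf c x + A ^ (U + 1) * pgf (F (U + 1)) x" for U
    unfolding A_def using x F_abs c_abs F_rec by (rule pgf_residual_unfold)
  have "(\<lambda>U. (\<Sum>u=1..U. complex_of_real (s u) * A ^ u) * pgf c x + A ^ (U + 1) * pgf (F (U + 1)) x)
      \<longlonglongrightarrow> pgf s A * pgf c x + 0"
    by (intro tendsto_add tendsto_mult_right partial remainder)
  then have "(\<lambda>U. A * pgf (F 1) x) \<longlonglongrightarrow> pgf s A * pgf c x + 0"
    unfolding unfold[symmetric] .
  then show ?thesis
    unfolding A_def using LIMSEQ_const_iff by auto
qed

end

section \<open>Renewal coefficients\<close>

lemma sum_triangle_swap:
  fixes m :: nat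
  shows "(\<Sum>j=0..m. \<Sum>n=0..j. f n j) = (\<Sum>n=0..m. \<Sum>j=n..m. f n j)"
proof -
  have "(\<Sum>j\<in>{0..m}. \<Sum>n\<in>{n\<in>{0..m}. n \<le> j}. f n j) = (\<Sum>n\<in>{0..m}. \<Sum>j\<in>{j\<in>{0..m}. n \<le> j}. f n j)"
    by (rule sum.swap_restrict) auto
  moreover have "j \<in> {0..m} \<Longrightarrow> {n\<in>{0..m}. n \<le> j} = {0..j}" and "{j\<in>{0..m}. n \<le> j} = {n..m}" for n j
    by auto
  ultimately show ?thesis
    by simp
qed

text \<open>The coefficient of z^k in 1 / (1 - G(z)).\<close>

function renewal_coeff :: "(nat \<Rightarrow> real) \<Rightarrow> nat \<Rightarrow> real" where
  "renewal_coeff g k = (if k = 0 then 1 else (\<Sum>l=1..k. g l * renewal_coeff g (k - l)))"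
  by auto
termination
  by (relation "Wellfounded.measure (\<lambda>(g, k). k)") auto

declare renewal_coeff.simps [simp del]

lemma renewal_coeff_0 [simp]: "renewal_coeff g 0 = 1"
  by (simp add: renewal_coeff.simps)

lemma renewal_coeff_pos: "0 < k \<Longrightarrow> renewal_coeff g k = (\<Sum>l=1..k. g l * renewal_coeff g (k - l))"
  by (simp add: renewal_coeff.simps)

declare ecoef.simps [simp del]

lemma ecoef_diag [simp]: "ecoef g j j = 1"
  by (simp add: ecoef.simps)

lemma ecoef_below: "n < j \<Longrightarrow> ecoef g j n = (\<Sum>k=Suc n..j. ecoef g j k * g (k - n))"
proof (cases "Suc n = j")
  case False
  assume "n < j"
  with False have "{Suc n..j} = insert j {n + 1..j - 1}"
    by auto
  with \<open>n < j\<close> False show ?thesis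
    by (subst ecoef.simps) (simp add: add.commute)
qed (subst ecoef.simps; auto)

lemma ecoef_eq_renewal_coeff: "n \<le> j \<Longrightarrow> ecoef g j n = renewal_coeff g (j - n)"
proof (induction "j - n" arbitrary: n rule: less_induct)
  case less
  show ?case
  proof (cases "n = j")
    case False
    with less.prems have "n < j"
      by simp
    have "ecoef g j n = (\<Sum>k=Suc n..j. renewal_coeff g (j - k) * g (k - n))"
      unfolding ecoef_below[OF \<open>n < j\<close>] by (rule sum.cong) (use less.hyps in auto)
    also have "\<dots> = (\<Sum>l=1..j-n. g l * renewal_coeff g (j - n - l))"
      using sum.shift_bounds_cl_nat_ivl[of "\<lambda>k. renewal_coeff g (j - k) * g (k - n)" 1 n "j - n"] \<open>n < j\<close>
      by (simp add: mult.commute diff_diff_eq add.commute)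
    also have "\<dots> = renewal_coeff g (j - n)"
      using \<open>n < j\<close> by (simp add: renewal_coeff_pos)
    finally show ?thesis .
  qed simp
qed

lemma renewal_convolution:
  "(\<Sum>i=1..j. g i * (\<Sum>n=0..j-i. renewal_coeff g (j - i - n) * q n)) = (\<Sum>n<j. renewal_coeff g (j - n) * q n)"
proof -
  have "(\<Sum>i=1..j. g i * (\<Sum>n=0..j-i. renewal_coeff g (j - i - n) * q n))
      = (\<Sum>i\<in>{1..j}. \<Sum>n\<in>{n\<in>{..<j}. n + i \<le> j}. g i * renewal_coeff g (j - i - n) * q n)"
  proof (rule sum.cong)
    fix i assume "i \<in> {1..j}"
    then have "{n\<in>{..<j}. n + i \<le> j} = {0..j-i}"
      by auto
    then show "g i * (\<Sum>n=0..j-i. renewal_coeff g (j - i - n) * q n) =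
        (\<Sum>n\<in>{n\<in>{..<j}. n + i \<le> j}. g i * renewal_coeff g (j - i - n) * q n)"
      by (simp add: sum_distrib_left mult.assoc)
  qed simp
  also have "\<dots> = (\<Sum>n\<in>{..<j}. \<Sum>i\<in>{i\<in>{1..j}. n + i \<le> j}. g i * renewal_coeff g (j - i - n) * q n)"
    by (rule sum.swap_restrict) auto
  also have "\<dots> = (\<Sum>n<j. renewal_coeff g (j - n) * q n)"
  proof (rule sum.cong)
    fix n assume "n \<in> {..<j}"
    then have "{i\<in>{1..j}. n + i \<le> j} = {1..j-n}" and "0 < j - n"
      by auto
    then show "(\<Sum>i\<in>{i\<in>{1..j}. n + i \<le> j}. g i * renewal_coeff g (j - i - n) * q n) = renewal_coeff g (j - n) * q n"
      by (simp add: renewal_coeff_pos sum_distrib_right diff_commute add.commute)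
  qed simp
  finally show ?thesis .
qed

lemma renewal_equation_solution:
  fixes y q :: "nat \<Rightarrow> real"
  assumes "\<And>j. j \<le> m \<Longrightarrow> y j = q j + (\<Sum>i=1..j. g i * y (j - i))" and "j \<le> m"
  shows "y j = (\<Sum>n=0..j. renewal_coeff g (j - n) * q n)"
  using assms(2)
proof (induction j rule: less_induct)
  case (less j)
  have "y (j - i) = (\<Sum>n=0..j-i. renewal_coeff g (j - i - n) * q n)" if "i \<in> {1..j}" for i
    using less that by simp
  then have "y j = q j + (\<Sum>i=1..j. g i * (\<Sum>n=0..j-i. renewal_coeff g (j - i - n) * q n))"
    unfolding assms(1)[OF less.prems] by simp
  also have "\<dots> = q j + (\<Sum>n<j. renewal_coeff g (j - n) * q n)"
    by (simp only: renewal_convolution)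
  also have "\<dots> = (\<Sum>n=0..j. renewal_coeff g (j - n) * q n)"
    by (simp add: atLeast0AtMost lessThan_Suc_atMost[symmetric])
  finally show ?case .
qed

section \<open>The queue\<close>

text \<open>
  The hypotheses of the theorem without stability, the finite means, the normalisation (N) and
  p_{n,0} >= 0: the formula only needs absolute convergence of the series involved.
\<close>

locale bulk_vacation_queue = batch_arrivals lam g
  for lam :: real and g :: "nat \<Rightarrow> real" +
  fixes a b :: nat and d :: real and s :: "nat \<Rightarrow> nat \<Rightarrow> real" and v :: "nat \<Rightarrow> real"
    and p0 :: "nat \<Rightarrow> real" and p :: "nat \<Rightarrow> nat \<Rightarrow> nat \<Rightarrow> real" and Q :: "nat \<Rightarrow> nat \<Rightarrow> real"
  assumes ab: "1 \<le> a" "a \<le> b"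
    and d: "d = 0 \<or> d = 1"
    and s_nonneg: "\<And>r n. a \<le> r \<Longrightarrow> r \<le> b \<Longrightarrow> 0 \<le> s r n"
    and s0: "\<And>r. a \<le> r \<Longrightarrow> r \<le> b \<Longrightarrow> s r 0 = 0"
    and s_sum: "\<And>r. a \<le> r \<Longrightarrow> r \<le> b \<Longrightarrow> s r sums 1"
    and v_nonneg: "\<And>n. 0 \<le> v n" and v0: "v 0 = 0" and v_sum: "v sums 1"
    and p_nonneg: "\<And>n r u. a \<le> r \<Longrightarrow> r \<le> b \<Longrightarrow> 1 \<le> u \<Longrightarrow> 0 \<le> p n r u"
    and Q_nonneg: "\<And>n u. 1 \<le> u \<Longrightarrow> 0 \<le> Q n u"
    and E1: "p0 0 = (1 - d) * ((1 - lam) * p0 0 + (1 - lam) * Q 0 1)"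
    and E2: "\<And>n. 1 \<le> n \<Longrightarrow> n \<le> a - 1 \<Longrightarrow>
      p0 n = (1 - d) * ((1 - lam) * p0 n + lam * (\<Sum>i=1..n. g i * p0 (n - i))
                        + (1 - lam) * Q n 1 + lam * (\<Sum>i=1..n. g i * Q (n - i) 1))"
    and E3: "\<And>r u. a \<le> r \<Longrightarrow> r \<le> b \<Longrightarrow> 1 \<le> u \<Longrightarrow>
      p 0 r u = (1 - lam) * p 0 r (u + 1) + s r u *
        ((\<Sum>m=a..b. (1 - lam) * p r m 1 + lam * (\<Sum>i=1..r. g i * p (r - i) m 1))
         + (1 - lam) * Q r 1 + lam * (\<Sum>i=1..r. g i * Q (r - i) 1)
         + (1 - d) * lam * (\<Sum>i=0..a-1. g (r - i) * p0 i))"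
    and E4: "\<And>n r u. 1 \<le> n \<Longrightarrow> a \<le> r \<Longrightarrow> r \<le> b - 1 \<Longrightarrow> 1 \<le> u \<Longrightarrow>
      p n r u = (1 - lam) * p n r (u + 1) + lam * (\<Sum>i=1..n. g i * p (n - i) r (u + 1))"
    and E5: "\<And>n u. 1 \<le> n \<Longrightarrow> 1 \<le> u \<Longrightarrow>
      p n b u = (1 - lam) * p n b (u + 1) + lam * (\<Sum>i=1..n. g i * p (n - i) b (u + 1)) + s b u *
        ((\<Sum>m=a..b. (1 - lam) * p (n + b) m 1 + lam * (\<Sum>i=1..n+b. g i * p (n + b - i) m 1))
         + (1 - lam) * Q (n + b) 1 + lam * (\<Sum>i=1..n+b. g i * Q (n + b - i) 1)
         + (1 - d) * lam * (\<Sum>i=0..a-1. g (n + b - i) * p0 i))"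
    and E6: "\<And>u. 1 \<le> u \<Longrightarrow>
      Q 0 u = (1 - lam) * Q 0 (u + 1) + (1 - lam) * ((\<Sum>m=a..b. p 0 m 1) + d * Q 0 1) * v u"
    and E7: "\<And>n u. 1 \<le> n \<Longrightarrow> n \<le> a - 1 \<Longrightarrow> 1 \<le> u \<Longrightarrow>
      Q n u = (1 - lam) * Q n (u + 1) + lam * (\<Sum>i=1..n. g i * Q (n - i) (u + 1))
        + v u * ((1 - lam) * ((\<Sum>m=a..b. p n m 1) + d * Q n 1)
                 + lam * (\<Sum>i=1..n. g i * ((\<Sum>m=a..b. p (n - i) m 1) + d * Q (n - i) 1)))"
    and E8: "\<And>n u. a \<le> n \<Longrightarrow> 1 \<le> u \<Longrightarrow>
      Q n u = (1 - lam) * Q n (u + 1) + lam * (\<Sum>i=1..n. g i * Q (n - i) (u + 1))"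
    and p_summable: "(\<lambda>(n, r, u). p n r u) summable_on (UNIV \<times> {a..b} \<times> {1..})"
    and Q_summable: "(\<lambda>(n, u). Q n u) summable_on (UNIV \<times> {1..})"
begin

abbreviation "tau \<equiv> tauc a b p Q"
abbreviation "pp \<equiv> pplus lam g a b p Q"
abbreviation "qp \<equiv> Qplus lam g a b p Q"
abbreviation "K r x \<equiv> Kfun lam g s r x"
abbreviation "H x \<equiv> Hfun lam g v x"

text \<open>
  Up to the factor \<open>\<tau>\<close>, \<open>start_rate m\<close> is the mass of the epochs at which the server takes up
  customers while \<open>m\<close> are waiting: ends of services and of vacations, and arrivals to the dormant
  server with \<open>j\<close> waiting, counted by \<open>dormant_rate j\<close>. The part of it that starts a batch of size
  \<open>r\<close> and leaves \<open>n\<close> waiting is \<open>batch_start r n\<close>, and \<open>vacation_start n\<close> is the mass of the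
  epochs at which a vacation begins with \<open>n\<close> waiting. These are the inhomogeneous terms of
  (E3)-(E7).
\<close>

definition dormant_rate :: "nat \<Rightarrow> real" where
  "dormant_rate j = (1 - d) * lam * p0 j / tau"

definition start_rate :: "nat \<Rightarrow> real" where
  "start_rate m = pp m + qp m + (\<Sum>j=0..a-1. dormant_rate j * g (m - j))"

definition batch_start :: "nat \<Rightarrow> nat \<Rightarrow> real" where
  "batch_start r n = (if r = b then start_rate (n + b) else if n = 0 then start_rate r else 0)"

definition vacation_start :: "nat \<Rightarrow> real" where
  "vacation_start n = (if n < a then pp n + d * qp n else 0)"

text \<open>
  A group of size \<open>i\<close> arriving at the dormant server with \<open>j\<close> waiting starts a batch of size
  \<open>i + j\<close> if \<open>i + j \<le> b\<close>; otherwise a batch of size \<open>b\<close> starts and \<open>i + j - b\<close> stay behind.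
\<close>

definition overshoot :: "nat \<Rightarrow> complex \<Rightarrow> complex" where
  "overshoot j x = (\<Sum>i. if b + 1 - j \<le> i then complex_of_real (g i) * x ^ (i + j - b) else 0)"

definition dormant_start :: "nat \<Rightarrow> complex \<Rightarrow> complex" where
  "dormant_start j x = (\<Sum>i=a..b. complex_of_real (g (i - j)) * K i x) + overshoot j x * K b x"

lemma pplus_eq: "pp n = (\<Sum>r=a..b. arrival_conv lam g (\<lambda>m. p m r 1) n) / tau"
  unfolding pplus_def pplus_r_def arrival_conv_def
  by (cases "n = 0") (simp_all add: sum_divide_distrib)

lemma Qplus_eq: "qp n = arrival_conv lam g (\<lambda>m. Q m 1) n / tau"
  unfolding Qplus_def arrival_conv_def by (cases "n = 0") simp_all

lemma summable_on_p_slice: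
  assumes "a \<le> r" "r \<le> b"
  shows "(\<lambda>(n, u). p n r u) summable_on (UNIV \<times> {1..})"
proof -
  let ?h = "\<lambda>(n, u). (n, r, u)"
  have "inj_on ?h (UNIV \<times> {1..})"
    by (auto simp: inj_on_def)
  moreover have "?h ` (UNIV \<times> {1..}) \<subseteq> UNIV \<times> {a..b} \<times> {1..}"
    using assms by auto
  ultimately have "((\<lambda>(n, r, u). p n r u) \<circ> ?h) summable_on (UNIV \<times> {1..})"
    using summable_on_subset_banach[OF p_summable] summable_on_reindex by blast
  then show ?thesis
    by (simp add: o_def case_prod_unfold)
qed

lemma summable_abs_p1:
  assumes "a \<le> r" "r \<le> b"
  shows "summable (\<lambda>n. \<bar>p n r 1\<bar>)"
  using nonneg_summable_on_rows(1)[where F = "\<lambda>u n. p n r u", OF summable_on_p_slice[OF assms]]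
    p_nonneg[OF assms] by simp

lemma summable_abs_Q1: "summable (\<lambda>n. \<bar>Q n 1\<bar>)"
  using nonneg_summable_on_rows(1)[where F = "\<lambda>u n. Q n u"] Q_summable Q_nonneg by simp

lemma summable_abs_pplus: "summable (\<lambda>n. \<bar>pp n\<bar>)"
  unfolding pplus_eq abs_divide
  by (intro summable_divide summable_abs_sum summable_abs_arrival_conv summable_abs_p1) auto

lemma summable_abs_Qplus: "summable (\<lambda>n. \<bar>qp n\<bar>)"
  unfolding Qplus_eq abs_divide
  by (intro summable_divide summable_abs_arrival_conv summable_abs_Q1)

lemma summable_abs_start_rate: "summable (\<lambda>m. \<bar>start_rate m\<bar>)"
  unfolding start_rate_def
  by (intro summable_abs_add summable_abs_pplus summable_abs_Qplus summable_abs_sum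
      summable_abs_cmult summable_abs_g_diff)

lemma summable_abs_batch_start: "summable (\<lambda>n. \<bar>batch_start r n\<bar>)"
proof (cases "r = b")
  case True
  then show ?thesis
    using summable_ignore_initial_segment[OF summable_abs_start_rate, of b]
    by (simp add: batch_start_def)
next
  case False
  then show ?thesis
    using summable_abs_finite_support[of "\<lambda>n. n = 0"]
    by (simp add: batch_start_def)
qed

lemma summable_abs_vacation_start: "summable (\<lambda>n. \<bar>vacation_start n\<bar>)"
  unfolding vacation_start_def by (rule summable_abs_finite_support) simp

lemma pgf_start_rate:
  assumes x: "norm x \<le> 1"
  shows "pgf start_rate x = pgf pp x + pgf qp x + (\<Sum>j=0..a-1. dormant_rate j * pgf (\<lambda>m. g (m - j)) x)"
proof -
  have "pgf start_rate x = pgf pp x + pgf qp x + pgf (\<lambda>m. \<Sum>j=0..a-1. dormant_rate j * g (m - j)) x"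
    unfolding start_rate_def[abs_def]
    by (simp add: pgf_add summable_abs_add summable_abs_sum summable_abs_cmult
        summable_abs_pplus summable_abs_Qplus summable_abs_g_diff x)
  also have "pgf (\<lambda>m. \<Sum>j=0..a-1. dormant_rate j * g (m - j)) x = (\<Sum>j=0..a-1. dormant_rate j * pgf (\<lambda>m. g (m - j)) x)"
    by (simp add: pgf_sum pgf_cmult summable_abs_cmult summable_abs_g_diff x)
  finally show ?thesis .
qed

lemma pgf_shifted_start_rate:
  assumes x: "norm x \<le> 1"
  shows "x ^ b * pgf (\<lambda>n. start_rate (n + b)) x =
    pgf pp x + pgf qp x - (\<Sum>m<b. complex_of_real (pp m + qp m) * x ^ m)
    + x ^ b * (\<Sum>j=0..a-1. dormant_rate j * (g (b - j) + overshoot j x))"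
proof -
  have tail: "pgf (\<lambda>m. g (m - j)) x - (\<Sum>m<b. complex_of_real (g (m - j)) * x ^ m) =
      x ^ b * (g (b - j) + overshoot j x)" if "j \<in> {0..a-1}" for j
    using pgf_shift[OF summable_abs_g_diff x, of b j, symmetric] pgf_shifted_tail[OF summable_abs_g x, of j b]
      that ab by (simp add: overshoot_def)
  have initial: "(\<Sum>m<b. complex_of_real (start_rate m) * x ^ m) = (\<Sum>m<b. complex_of_real (pp m + qp m) * x ^ m)
      + (\<Sum>j=0..a-1. dormant_rate j * (\<Sum>m<b. complex_of_real (g (m - j)) * x ^ m))"
  proof -
    have "complex_of_real (start_rate m) * x ^ m = complex_of_real (pp m + qp m) * x ^ m
        + (\<Sum>j=0..a-1. dormant_rate j * (complex_of_real (g (m - j)) * x ^ m))" for m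
      by (simp add: start_rate_def distrib_left distrib_right sum_distrib_left sum_distrib_right mult_ac)
    then show ?thesis
      by (simp add: sum.distrib sum_distrib_left sum.swap[of _ "{..<b}"])
  qed
  have "x ^ b * pgf (\<lambda>n. start_rate (n + b)) x = pgf start_rate x - (\<Sum>m<b. complex_of_real (start_rate m) * x ^ m)"
    using summable_abs_start_rate x by (rule pgf_shift)
  also have "\<dots> = pgf pp x + pgf qp x - (\<Sum>m<b. complex_of_real (pp m + qp m) * x ^ m)
      + (\<Sum>j=0..a-1. dormant_rate j * (pgf (\<lambda>m. g (m - j)) x - (\<Sum>m<b. complex_of_real (g (m - j)) * x ^ m)))"
    unfolding pgf_start_rate[OF x] initial by (simp add: right_diff_distrib sum_subtractf)
  also have "\<dots> = pgf pp x + pgf qp x - (\<Sum>m<b. complex_of_real (pp m + qp m) * x ^ m)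
      + x ^ b * (\<Sum>j=0..a-1. dormant_rate j * (g (b - j) + overshoot j x))"
    by (simp add: tail sum_distrib_left mult.left_commute)
  finally show ?thesis .
qed

context
  assumes tau_nonzero: "tau \<noteq> 0"
begin

lemma tau_pplus: "tau * pp n = (\<Sum>r=a..b. arrival_conv lam g (\<lambda>m. p m r 1) n)"
  using tau_nonzero by (simp add: pplus_eq)

lemma tau_Qplus: "tau * qp n = arrival_conv lam g (\<lambda>m. Q m 1) n"
  using tau_nonzero by (simp add: Qplus_eq)

lemma tau_start_rate:
  "tau * start_rate m = (\<Sum>r=a..b. arrival_conv lam g (\<lambda>k. p k r 1) m)
    + arrival_conv lam g (\<lambda>k. Q k 1) m + (1 - d) * lam * (\<Sum>j=0..a-1. g (m - j) * p0 j)"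
  using tau_nonzero
  by (simp add: start_rate_def dormant_rate_def distrib_left tau_pplus tau_Qplus sum_distrib_left mult_ac)

lemma tau_vacation_start:
  "n < a \<Longrightarrow> tau * vacation_start n = arrival_conv lam g (\<lambda>k. (\<Sum>m=a..b. p k m 1) + d * Q k 1) n"
  by (simp add: vacation_start_def arrival_conv_linear distrib_left tau_pplus tau_Qplus mult.left_commute)

lemma p_recursion:
  assumes r: "a \<le> r" "r \<le> b" and u: "1 \<le> u"
  shows "p n r u = arrival_conv lam g (\<lambda>n. p n r (u + 1)) n + s r u * (tau * batch_start r n)"
proof (cases "n = 0")
  case True
  then show ?thesis
    using E3[OF r u] by (simp add: batch_start_def tau_start_rate arrival_conv_def)
next
  case False
  then show ?thesis
    using E4[of n r u] E5[of n u] r u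
    by (cases "r = b") (simp_all add: batch_start_def tau_start_rate arrival_conv_def)
qed

lemma Q_recursion:
  assumes u: "1 \<le> u"
  shows "Q n u = arrival_conv lam g (\<lambda>n. Q n (u + 1)) n + v u * (tau * vacation_start n)"
proof -
  consider "n = 0" | "1 \<le> n" "n \<le> a - 1" | "a \<le> n"
    by linarith
  then show ?thesis
  proof cases
    case 1
    then show ?thesis
      using E6[OF u] tau_vacation_start[of 0] ab by (simp add: arrival_conv_def mult_ac)
  next
    case 2
    then show ?thesis
      using E7[OF 2 u] tau_vacation_start[of n] by (simp add: arrival_conv_def mult_ac)
  next
    case 3
    then show ?thesis
      using E8[OF 3 u] by (simp add: vacation_start_def arrival_conv_def)
  qed
qed

lemma pgf_p_service_end:
  assumes r: "a \<le> r" "r \<le> b" and x: "norm x \<le> 1"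
  shows "arrival_pgf lam g x * pgf (\<lambda>n. p n r 1) x = tau * K r x * pgf (batch_start r) x"
proof -
  have "arrival_pgf lam g x * pgf ((\<lambda>u n. p n r u) 1) x =
      pgf (s r) (arrival_pgf lam g x) * pgf (\<lambda>n. tau * batch_start r n) x"
  proof (rule pgf_residual_recursion[OF x])
    show "summable (s r)"
      using s_sum[OF r] by (simp add: sums_iff)
    show "summable (\<lambda>n. \<bar>tau * batch_start r n\<bar>)"
      by (rule summable_abs_cmult[OF summable_abs_batch_start])
    show "p n r u = arrival_conv lam g (\<lambda>n. p n r (u + 1)) n + s r u * (tau * batch_start r n)"
      if "1 \<le> u" for u n
      using r that by (rule p_recursion)
    show "(\<lambda>(n, u). p n r u) summable_on (UNIV \<times> {1..})"
      using r by (rule summable_on_p_slice)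
  qed (simp_all add: r p_nonneg s_nonneg s0)
  then show ?thesis
    by (simp add: pgf_cmult[OF summable_abs_batch_start x] Kfun_eq_pgf_arrival_pgf)
qed

lemma pgf_Q_vacation_end:
  assumes x: "norm x \<le> 1"
  shows "arrival_pgf lam g x * pgf (\<lambda>n. Q n 1) x = tau * H x * pgf vacation_start x"
proof -
  have "arrival_pgf lam g x * pgf ((\<lambda>u n. Q n u) 1) x =
      pgf v (arrival_pgf lam g x) * pgf (\<lambda>n. tau * vacation_start n) x"
  proof (rule pgf_residual_recursion[OF x])
    show "summable v"
      using v_sum by (simp add: sums_iff)
    show "summable (\<lambda>n. \<bar>tau * vacation_start n\<bar>)"
      by (rule summable_abs_cmult[OF summable_abs_vacation_start])
    show "Q n u = arrival_conv lam g (\<lambda>n. Q n (u + 1)) n + v u * (tau * vacation_start n)"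
      if "1 \<le> u" for u n
      using that by (rule Q_recursion)
  qed (simp_all add: Q_nonneg v_nonneg v0 Q_summable[simplified])
  then show ?thesis
    by (simp add: pgf_cmult[OF summable_abs_vacation_start x] Hfun_eq_pgf_arrival_pgf)
qed

lemma pgf_pplus:
  assumes x: "norm x \<le> 1"
  shows "pgf pp x = (\<Sum>r=a..b. K r x * pgf (batch_start r) x)"
proof -
  have "tau * pgf pp x = pgf (\<lambda>n. \<Sum>r=a..b. arrival_conv lam g (\<lambda>m. p m r 1) n) x"
    using pgf_cmult[OF summable_abs_pplus x, of tau] by (simp add: tau_pplus)
  also have "\<dots> = (\<Sum>r=a..b. pgf (arrival_conv lam g (\<lambda>m. p m r 1)) x)"
  proof (rule pgf_sum[OF _ _ x])
    show "summable (\<lambda>n. \<bar>arrival_conv lam g (\<lambda>m. p m r 1) n\<bar>)" if "r \<in> {a..b}" for r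
      using that by (intro summable_abs_arrival_conv summable_abs_p1) auto
  qed simp
  also have "\<dots> = (\<Sum>r=a..b. arrival_pgf lam g x * pgf (\<lambda>n. p n r 1) x)"
    by (intro sum.cong refl pgf_arrival_conv[OF x] summable_abs_p1) auto
  also have "\<dots> = tau * (\<Sum>r=a..b. K r x * pgf (batch_start r) x)"
    unfolding sum_distrib_left by (rule sum.cong) (auto simp: pgf_p_service_end[OF _ _ x] mult.assoc simp del: One_nat_def)
  finally show ?thesis
    using tau_nonzero by simp
qed

lemma pgf_Qplus:
  assumes x: "norm x \<le> 1"
  shows "pgf qp x = H x * (\<Sum>n<a. complex_of_real (pp n + d * qp n) * x ^ n)"
proof -
  have "tau * pgf qp x = pgf (arrival_conv lam g (\<lambda>m. Q m 1)) x"
    using pgf_cmult[OF summable_abs_Qplus x, of tau] by (simp add: tau_Qplus)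
  also have "\<dots> = arrival_pgf lam g x * pgf (\<lambda>n. Q n 1) x"
    using x summable_abs_Q1 by (rule pgf_arrival_conv)
  also have "\<dots> = tau * (H x * (\<Sum>n<a. complex_of_real (pp n + d * qp n) * x ^ n))"
    unfolding pgf_Q_vacation_end[OF x] vacation_start_def[abs_def] pgf_finite_support by simp
  finally show ?thesis
    using tau_nonzero by simp
qed

lemma pgf_pplus_split:
  assumes x: "norm x \<le> 1"
  shows "pgf pp x = (\<Sum>r=a..b-1. K r x * start_rate r) + K b x * pgf (\<lambda>n. start_rate (n + b)) x"
proof -
  have "{a..b} = insert b {a..b-1}" and "b \<notin> {a..b-1}"
    using ab by auto
  moreover have "pgf (batch_start r) x = start_rate r" if "r \<in> {a..b-1}" for r
  proof -
    have "batch_start r = (\<lambda>n. if n = 0 then start_rate r else 0)"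
      using that ab by (auto simp: batch_start_def)
    then show ?thesis
      by (simp add: pgf_single)
  qed
  moreover have "batch_start b = (\<lambda>n. start_rate (n + b))"
    by (simp add: batch_start_def[abs_def])
  ultimately show ?thesis
    by (simp add: pgf_pplus[OF x] add.commute)
qed

lemma pgf_pplus_mult_denominator_dormant:
  assumes x: "norm x \<le> 1"
  shows "pgf pp x * (x ^ b - K b x) =
      (\<Sum>r=a..b-1. complex_of_real (pp r + qp r) * (x ^ b * K r x - x ^ r * K b x))
    + K b x * (pgf qp x - (\<Sum>m<a. complex_of_real (pp m + qp m) * x ^ m))
    + x ^ b * (\<Sum>j=0..a-1. dormant_rate j * dormant_start j x)"
proof -
  define T where "T m = complex_of_real (pp m + qp m)" for m
  define D where "D = (\<Sum>j=0..a-1. dormant_rate j * (\<Sum>r=a..b-1. complex_of_real (g (r - j)) * K r x))"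
  define E where "E = (\<Sum>j=0..a-1. dormant_rate j * (g (b - j) + overshoot j x))"
  have "{..<b} = {..<a} \<union> {a..b-1}" and "{..<a} \<inter> {a..b-1} = {}"
    using ab by auto
  then have lower: "(\<Sum>m<b. T m * x ^ m) = (\<Sum>m<a. T m * x ^ m) + (\<Sum>m=a..b-1. T m * x ^ m)"
    by (simp add: sum.union_disjoint)
  have "(\<Sum>r=a..b-1. K r x * start_rate r) = (\<Sum>r=a..b-1. T r * K r x)
      + (\<Sum>r=a..b-1. \<Sum>j=0..a-1. dormant_rate j * (complex_of_real (g (r - j)) * K r x))"
    by (simp add: start_rate_def T_def distrib_left sum.distrib sum_distrib_left mult_ac)
  also have "(\<Sum>r=a..b-1. \<Sum>j=0..a-1. dormant_rate j * (complex_of_real (g (r - j)) * K r x)) = D"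
    unfolding D_def sum_distrib_left by (rule sum.swap)
  finally have service: "(\<Sum>r=a..b-1. K r x * start_rate r) = (\<Sum>r=a..b-1. T r * K r x) + D" .
  have "{a..b} = insert b {a..b-1}" and "b \<notin> {a..b-1}"
    using ab by auto
  then have dormant: "(\<Sum>j=0..a-1. dormant_rate j * dormant_start j x) = D + K b x * E"
    by (simp add: dormant_start_def D_def E_def distrib_left sum.distrib sum_distrib_left mult_ac)
  have "x ^ b * pgf pp x = x ^ b * (\<Sum>r=a..b-1. K r x * start_rate r)
      + K b x * (pgf pp x + pgf qp x - (\<Sum>m<b. T m * x ^ m) + x ^ b * E)"
    unfolding T_def E_def pgf_shifted_start_rate[OF x, symmetric]
    by (subst pgf_pplus_split[OF x]) (simp add: algebra_simps)
  then show ?thesis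
    unfolding T_def[symmetric] dormant service lower
    by (simp add: algebra_simps sum_subtractf sum_distrib_left)
qed

lemma dormant_rate_renewal:
  assumes "j < a"
  shows "dormant_rate j = (1 - d) * (\<Sum>n=0..j. ecoef g j n * qp n)"
proof (cases "d = 0")
  case True
  define y where "y k = lam * p0 k / tau" for k
  have "y k = qp k + (\<Sum>i=1..k. g i * y (k - i))" if "k \<le> a - 1" for k
  proof (cases "k = 0")
    case True
    have "lam * p0 0 = p0 0 - (1 - lam) * p0 0"
      by (simp add: algebra_simps)
    also have "\<dots> = tau * qp 0"
      by (subst (1) E1) (simp add: \<open>d = 0\<close> tau_Qplus arrival_conv_def algebra_simps)
    finally have "lam * p0 0 = tau * qp 0" .
    with True show ?thesis
      using tau_nonzero by (simp add: y_def field_simps)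
  next
    case False
    then have k: "1 \<le> k" "k \<le> a - 1"
      using that by auto
    have "lam * p0 k = p0 k - (1 - lam) * p0 k"
      by (simp add: algebra_simps)
    also have "\<dots> = lam * (\<Sum>i=1..k. g i * p0 (k - i)) + tau * qp k"
      by (subst (1) E2[OF k]) (simp add: \<open>d = 0\<close> tau_Qplus arrival_conv_def algebra_simps)
    finally have "lam * p0 k = lam * (\<Sum>i=1..k. g i * p0 (k - i)) + tau * qp k" .
    then show ?thesis
      using tau_nonzero by (simp add: y_def field_simps sum_distrib_left sum_divide_distrib)
  qed
  then have "y j = (\<Sum>n=0..j. renewal_coeff g (j - n) * qp n)"
    by (rule renewal_equation_solution[where m = "a - 1"]) (use assms in linarith)+
  then show ?thesis
    unfolding dormant_rate_def using \<open>d = 0\<close> by (simp add: y_def ecoef_eq_renewal_coeff)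
next
  case False
  with d show ?thesis
    unfolding dormant_rate_def by simp
qed

lemma sum_dormant_rate_dormant_start:
  fixes x :: complex
  shows "x ^ b * (\<Sum>j=0..a-1. dormant_rate j * dormant_start j x) =
    (\<Sum>n=0..a-1. qp n * (x ^ b * (1 - d) * (\<Sum>j=n..a-1. ecoef g j n * dormant_start j x)))"
proof -
  have "(\<Sum>j=0..a-1. dormant_rate j * dormant_start j x) =
      (\<Sum>j=0..a-1. \<Sum>n=0..j. (1 - d) * (qp n * (ecoef g j n * dormant_start j x)))"
    using ab by (intro sum.cong refl) (simp add: dormant_rate_renewal sum_distrib_left sum_distrib_right mult_ac)
  also have "\<dots> = (\<Sum>n=0..a-1. \<Sum>j=n..a-1. (1 - d) * (qp n * (ecoef g j n * dormant_start j x)))"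
    by (rule sum_triangle_swap)
  finally show ?thesis
    by (simp add: sum_distrib_left mult_ac)
qed

lemma pgf_pplus_mult_denominator:
  assumes x: "norm x \<le> 1"
  shows "pgf pp x * (x ^ b - K b x) =
      (\<Sum>n=0..a-1. complex_of_real (pp n) * x ^ n) * (H x - 1) * K b x
    + (\<Sum>n=0..a-1. complex_of_real (qp n) *
        (x ^ n * (complex_of_real d * H x - 1) * K b x
        + x ^ b * complex_of_real (1 - d) * (\<Sum>j=n..a-1. complex_of_real (ecoef g j n) * dormant_start j x)))
    + (\<Sum>n=a..b-1. complex_of_real (pp n + qp n) * (x ^ b * K n x - x ^ n * K b x))"
proof -
  have "{..<a} = {0..a-1}"
    using ab by auto
  then have vacation: "K b x * (pgf qp x - (\<Sum>m<a. complex_of_real (pp m + qp m) * x ^ m)) =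
      (\<Sum>n=0..a-1. complex_of_real (pp n) * x ^ n) * (H x - 1) * K b x
    + (\<Sum>n=0..a-1. complex_of_real (qp n) * (x ^ n * (complex_of_real d * H x - 1) * K b x))"
    unfolding pgf_Qplus[OF x]
    by (simp add: sum_distrib_left sum_distrib_right sum_subtractf[symmetric] sum.distrib[symmetric] algebra_simps)
  show ?thesis
    unfolding pgf_pplus_mult_denominator_dormant[OF x] sum_dormant_rate_dormant_start vacation
    by (simp add: distrib_left sum.distrib sum_subtractf algebra_simps)
qed

end

end

theorem mainTheorem4:
  fixes a b :: nat and lam d :: real
    and g :: "nat \<Rightarrow> real" and s :: "nat \<Rightarrow> nat \<Rightarrow> real" and v :: "nat \<Rightarrow> real"
    and p0 :: "nat \<Rightarrow> real" and p :: "nat \<Rightarrow> nat \<Rightarrow> nat \<Rightarrow> real" and Q :: "nat \<Rightarrow> nat \<Rightarrow> real"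
    and x :: complex
  assumes ab: "1 \<le> a" "a \<le> b"
    and lam: "0 < lam" "lam < 1"
    and d: "d = 0 \<or> d = 1"
    (* group-size distribution *)
    and g_nonneg: "\<And>m. 0 \<le> g m" and g0: "g 0 = 0"
    and g_sum: "g sums 1" and g_mean: "summable (\<lambda>m. real m * g m)"
    (* service-time distributions *)
    and s_nonneg: "\<And>r n. a \<le> r \<Longrightarrow> r \<le> b \<Longrightarrow> 0 \<le> s r n"
    and s0: "\<And>r. a \<le> r \<Longrightarrow> r \<le> b \<Longrightarrow> s r 0 = 0"
    and s_sum: "\<And>r. a \<le> r \<Longrightarrow> r \<le> b \<Longrightarrow> s r sums 1"
    and s_mean: "\<And>r. a \<le> r \<Longrightarrow> r \<le> b \<Longrightarrow> summable (\<lambda>n. real n * s r n)"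
    (* vacation-time distribution *)
    and v_nonneg: "\<And>n. 0 \<le> v n" and v0: "v 0 = 0"
    and v_sum: "v sums 1" and v_mean: "summable (\<lambda>n. real n * v n)"
    (* traffic intensity rho = lam * gbar / (b * mu_b) with mu_b = 1 / s_b *)
    and rho: "lam * (\<Sum>m. real m * g m) * (\<Sum>n. real n * s b n) / real b < 1"
    (* stationary probabilities are nonnegative *)
    and p0_nonneg: "\<And>n. n < a \<Longrightarrow> 0 \<le> p0 n"
    and p_nonneg: "\<And>n r u. a \<le> r \<Longrightarrow> r \<le> b \<Longrightarrow> 1 \<le> u \<Longrightarrow> 0 \<le> p n r u"
    and Q_nonneg: "\<And>n u. 1 \<le> u \<Longrightarrow> 0 \<le> Q n u"
    (* (E1) *)
    and E1: "p0 0 = (1 - d) * ((1 - lam) * p0 0 + (1 - lam) * Q 0 1)"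
    (* (E2) *)
    and E2: "\<And>n. 1 \<le> n \<Longrightarrow> n \<le> a - 1 \<Longrightarrow>
      p0 n = (1 - d) * ((1 - lam) * p0 n + lam * (\<Sum>i=1..n. g i * p0 (n - i))
                        + (1 - lam) * Q n 1 + lam * (\<Sum>i=1..n. g i * Q (n - i) 1))"
    (* (E3) *)
    and E3: "\<And>r u. a \<le> r \<Longrightarrow> r \<le> b \<Longrightarrow> 1 \<le> u \<Longrightarrow>
      p 0 r u = (1 - lam) * p 0 r (u + 1) + s r u *
        ((\<Sum>m=a..b. (1 - lam) * p r m 1 + lam * (\<Sum>i=1..r. g i * p (r - i) m 1))
         + (1 - lam) * Q r 1 + lam * (\<Sum>i=1..r. g i * Q (r - i) 1)
         + (1 - d) * lam * (\<Sum>i=0..a-1. g (r - i) * p0 i))"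
    (* (E4) *)
    and E4: "\<And>n r u. 1 \<le> n \<Longrightarrow> a \<le> r \<Longrightarrow> r \<le> b - 1 \<Longrightarrow> 1 \<le> u \<Longrightarrow>
      p n r u = (1 - lam) * p n r (u + 1) + lam * (\<Sum>i=1..n. g i * p (n - i) r (u + 1))"
    (* (E5) *)
    and E5: "\<And>n u. 1 \<le> n \<Longrightarrow> 1 \<le> u \<Longrightarrow>
      p n b u = (1 - lam) * p n b (u + 1) + lam * (\<Sum>i=1..n. g i * p (n - i) b (u + 1)) + s b u *
        ((\<Sum>m=a..b. (1 - lam) * p (n + b) m 1 + lam * (\<Sum>i=1..n+b. g i * p (n + b - i) m 1))
         + (1 - lam) * Q (n + b) 1 + lam * (\<Sum>i=1..n+b. g i * Q (n + b - i) 1)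
         + (1 - d) * lam * (\<Sum>i=0..a-1. g (n + b - i) * p0 i))"
    (* (E6) *)
    and E6: "\<And>u. 1 \<le> u \<Longrightarrow>
      Q 0 u = (1 - lam) * Q 0 (u + 1) + (1 - lam) * ((\<Sum>m=a..b. p 0 m 1) + d * Q 0 1) * v u"
    (* (E7) *)
    and E7: "\<And>n u. 1 \<le> n \<Longrightarrow> n \<le> a - 1 \<Longrightarrow> 1 \<le> u \<Longrightarrow>
      Q n u = (1 - lam) * Q n (u + 1) + lam * (\<Sum>i=1..n. g i * Q (n - i) (u + 1))
        + v u * ((1 - lam) * ((\<Sum>m=a..b. p n m 1) + d * Q n 1)
                 + lam * (\<Sum>i=1..n. g i * ((\<Sum>m=a..b. p (n - i) m 1) + d * Q (n - i) 1)))"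
    (* (E8) *)
    and E8: "\<And>n u. a \<le> n \<Longrightarrow> 1 \<le> u \<Longrightarrow>
      Q n u = (1 - lam) * Q n (u + 1) + lam * (\<Sum>i=1..n. g i * Q (n - i) (u + 1))"
    (* (N) *)
    and p_summable: "(\<lambda>(n, r, u). p n r u) summable_on (UNIV \<times> {a..b} \<times> {1..})"
    and Q_summable: "(\<lambda>(n, u). Q n u) summable_on (UNIV \<times> {1..})"
    and N: "(1 - d) * (\<Sum>n=0..a-1. p0 n)
            + infsum (\<lambda>(n, r, u). p n r u) (UNIV \<times> {a..b} \<times> {1..})
            + infsum (\<lambda>(n, u). Q n u) (UNIV \<times> {1..}) = 1"
    (* the point x *)
    and x: "norm x \<le> 1"
    and xden: "x ^ b \<noteq> Kfun lam g s b x"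
  shows "(\<Sum>n. complex_of_real (pplus lam g a b p Q n) * x ^ n) =
     ( (\<Sum>n=0..a-1. complex_of_real (pplus lam g a b p Q n) * x ^ n)
          * (Hfun lam g v x - 1) * Kfun lam g s b x
     + (\<Sum>n=0..a-1. complex_of_real (Qplus lam g a b p Q n) *
          ( x ^ n * (complex_of_real d * Hfun lam g v x - 1) * Kfun lam g s b x
          + x ^ b * complex_of_real (1 - d) *
              (\<Sum>j=n..a-1. complex_of_real (ecoef g j n) *
                 ( (\<Sum>i=a..b. complex_of_real (g (i - j)) * Kfun lam g s i x)
                 + (\<Sum>i. if b + 1 - j \<le> i then complex_of_real (g i) * x ^ (i + j - b) else 0)
                     * Kfun lam g s b x))))
     + (\<Sum>n=a..b-1. complex_of_real (pplus lam g a b p Q n + Qplus lam g a b p Q n) *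
          (x ^ b * Kfun lam g s n x - x ^ n * Kfun lam g s b x)) )
     / (x ^ b - Kfun lam g s b x)"
proof (cases "tauc a b p Q = 0")
  case True
  \<comment> \<open>then p^+ and Q^+ are divisions by zero, hence 0, and both sides vanish\<close>
  then show ?thesis
    by (simp add: pplus_def pplus_r_def Qplus_def)
next
  case False
  interpret bulk_vacation_queue lam g a b d s v p0 p Q
    by unfold_locales (fact assms)+
  show ?thesis
    using pgf_pplus_mult_denominator[OF False x] xden
    unfolding dormant_start_def overshoot_def pgf_def
    by (intro eq_divide_imp) simp_all
qed

end
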